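(* (a) Let $K$ be a division ring and $\sigma$ an automorphism of $K$ of finite order $n$ such that no $\sigma^i$ with $1\le i<n$ is an inner automorphism. Then in $K[t;\sigma]$ the set of right roots of $t^n-1$ is exactly $\Delta^\sigma(1)=\{\sigma(x)x^{-1}\mid 0\ne x\in K\}$, and no nonzero polynomial of degree $<n$ in $K[t;\sigma]$ vanishes at every element of $\Delta^\sigma(1)$ (so $t^n-1$ is the minimal polynomial of $\Delta^\sigma(1)$). (b) Let $K$ be a division ring of characteristic $p>0$ and $\delta$ a derivation of $K$ with $\delta^{p^n}=0$ and satisfying no nontrivial identity $\sum_{i=0}^{m}c_i\delta^i=0$ ($c_i\in K$, not all zero) with $m<p^n$. Then in $K[t;\delta]$ the set of right roots of $t^{p^n}$ is exactly $\Delta^\delta(0)=\{\delta(x)x^{-1}\mid 0\ne x\in K\}$, and no nonzero polynomial of degree $<p^n$ vanishes at every element of $\Delta^\delta(0)$.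
   Context: $K[t;\sigma]$ is the skew polynomial ring with $ta=\sigma(a)t$; $K[t;\delta]$ is the differential polynomial ring with $ta=at+\delta(a)$. For $f$ in such a ring $R$ and $a\in K$, $f(a)$ is the unique element of $K$ with $f-f(a)\in R(t-a)$; $a$ is a right root of $f$ if $f(a)=0$. *)

theory Defs
  imports "HOL-Computational_Algebra.Polynomial"
begin

text \<open>Polynomials over a division ring are represented by the type 'a poly, used
only for its additive structure (coefficients, degree, monomials); the
non-commutative skew multiplications are defined below.\<close>

definition ring_automorphism :: "('a::division_ring \<Rightarrow> 'a) \<Rightarrow> bool" where
  "ring_automorphism \<sigma> \<longleftrightarrow> bij \<sigma> \<and> (\<forall>x y. \<sigma> (x + y) = \<sigma> x + \<sigma> y)
     \<and> (\<forall>x y. \<sigma> (x * y) = \<sigma> x * \<sigma> y) \<and> \<sigma> 1 = 1"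

definition inner_automorphism :: "('a::division_ring \<Rightarrow> 'a) \<Rightarrow> bool" where
  "inner_automorphism \<tau> \<longleftrightarrow> (\<exists>c. c \<noteq> 0 \<and> (\<forall>x. \<tau> x = c * x * inverse c))"

definition derivation :: "('a::division_ring \<Rightarrow> 'a) \<Rightarrow> bool" where
  "derivation \<delta> \<longleftrightarrow> (\<forall>x y. \<delta> (x + y) = \<delta> x + \<delta> y)
     \<and> (\<forall>x y. \<delta> (x * y) = \<delta> x * y + x * \<delta> y)"

text \<open>Multiplication in K[t;sigma]: (a t^i)(b t^j) = a sigma^i(b) t^(i+j).\<close>
definition skew_mult :: "('a::division_ring \<Rightarrow> 'a) \<Rightarrow> 'a poly \<Rightarrow> 'a poly \<Rightarrow> 'a poly" where
  "skew_mult \<sigma> p q = (\<Sum>i\<le>degree p. \<Sum>j\<le>degree q.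
      monom (coeff p i * (\<sigma> ^^ i) (coeff q j)) (i + j))"

text \<open>Multiplication in K[t;delta]: t^i b = sum_k (i choose k) delta^(i-k)(b) t^k.\<close>
definition diff_mult :: "('a::division_ring \<Rightarrow> 'a) \<Rightarrow> 'a poly \<Rightarrow> 'a poly \<Rightarrow> 'a poly" where
  "diff_mult \<delta> p q = (\<Sum>i\<le>degree p. \<Sum>j\<le>degree q. \<Sum>k\<le>i.
      monom (coeff p i * of_nat (i choose k) * (\<delta> ^^ (i - k)) (coeff q j)) (k + j))"

definition skew_eval :: "('a::division_ring \<Rightarrow> 'a) \<Rightarrow> 'a poly \<Rightarrow> 'a \<Rightarrow> 'a" where
  "skew_eval \<sigma> f a = (THE b. \<exists>q. f - [:b:] = skew_mult \<sigma> q [:- a, 1:])"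

definition diff_eval :: "('a::division_ring \<Rightarrow> 'a) \<Rightarrow> 'a poly \<Rightarrow> 'a \<Rightarrow> 'a" where
  "diff_eval \<delta> f a = (THE b. \<exists>q. f - [:b:] = diff_mult \<delta> q [:- a, 1:])"

definition Delta_sigma_1 :: "('a::division_ring \<Rightarrow> 'a) \<Rightarrow> 'a set" where
  "Delta_sigma_1 \<sigma> = {\<sigma> x * inverse x | x. x \<noteq> 0}"

definition Delta_delta_0 :: "('a::division_ring \<Rightarrow> 'a) \<Rightarrow> 'a set" where
  "Delta_delta_0 \<delta> = {\<delta> x * inverse x | x. x \<noteq> 0}"

end

theory Submission
  imports Defs
begin

(* Both parts rest on the Lam--Leroy description of evaluation in an Ore extension:
   f(a) = sum_i f_i N_i(a) with the norms N_(k+1)(a) = sigma^k(a) N_k(a) in K[t;sigma]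
   and N_(k+1)(a) = delta(N_k(a)) + N_k(a) a in K[t;delta].  It is proved once for both
   rings: a generic division lemma shows that every f has a constant remainder modulo
   R(t - a), and any pairing that kills R(t - a) computes that remainder.
   At conjugates the norms become N_k(sigma(x) x^-1) = sigma^k(x) x^-1 and
   N_k(delta(x) x^-1) x = delta^k(x), so f vanishes on Delta^sigma(1) (resp. on
   Delta^delta(0)) iff the operator sum_i f_i sigma^i (resp. sum_i f_i delta^i) is zero.
   (a) Dedekind--Artin independence of 1, sigma, ..., sigma^(n-1), valid since no power
   below the order is inner, gives minimality, and a Hilbert 90 argument shows that every
   root of t^n - 1, i.e. every a with N_n(a) = 1, is a sigma-conjugate of 1.
   (b) Independence of 1, delta, ..., delta^(N-1) is a hypothesis; and if N_N(a) = 0,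
   the last nonzero norm y = N_k(a) exhibits a = delta(y^-1) y as a delta-conjugate of 0. *)

section \<open>Ring automorphisms and derivations\<close>

lemma automorphism_add: "ring_automorphism \<tau> \<Longrightarrow> \<tau> (x + y) = \<tau> x + \<tau> y"
  by (simp add: ring_automorphism_def)

lemma automorphism_mult: "ring_automorphism \<tau> \<Longrightarrow> \<tau> (x * y) = \<tau> x * \<tau> y"
  by (simp add: ring_automorphism_def)

lemma automorphism_one: "ring_automorphism \<tau> \<Longrightarrow> \<tau> 1 = 1"
  by (simp add: ring_automorphism_def)

lemma automorphism_zero: "ring_automorphism \<tau> \<Longrightarrow> \<tau> 0 = 0"
  using automorphism_add[of \<tau> 0 0] by simp

lemma automorphism_minus: "ring_automorphism \<tau> \<Longrightarrow> \<tau> (- x) = - \<tau> x"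
  using automorphism_add[of \<tau> x "- x"] automorphism_zero[of \<tau>] by (simp add: minus_unique)

lemma automorphism_eq_0_iff: "ring_automorphism \<tau> \<Longrightarrow> \<tau> x = 0 \<longleftrightarrow> x = 0"
  using automorphism_zero[of \<tau>] unfolding ring_automorphism_def bij_def inj_def by metis

lemma automorphism_inverse:
  assumes "ring_automorphism \<tau>"
  shows "\<tau> (inverse x) = inverse (\<tau> x)"
proof (cases "x = 0")
  case True
  then show ?thesis using automorphism_zero[OF assms] by simp
next
  case False
  then have "\<tau> x * \<tau> (inverse x) = 1"
    using automorphism_mult[OF assms, of x "inverse x"] automorphism_one[OF assms] by simp
  then show ?thesis by (rule inverse_unique[symmetric])
qed

lemma automorphism_sum: "ring_automorphism \<tau> \<Longrightarrow> \<tau> (\<Sum>k\<in>A. f k) = (\<Sum>k\<in>A. \<tau> (f k))"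
  by (induction A rule: infinite_finite_induct) (simp_all add: automorphism_zero automorphism_add)

lemma automorphism_funpow: "ring_automorphism \<sigma> \<Longrightarrow> ring_automorphism (\<sigma> ^^ k)"
proof (induction k)
  case 0
  then show ?case by (auto simp: ring_automorphism_def bij_id[unfolded id_def])
next
  case (Suc k)
  then show ?case unfolding ring_automorphism_def
    by (auto intro: bij_comp simp: funpow_Suc_right simp del: funpow.simps)
qed

lemma derivation_add: "derivation \<delta> \<Longrightarrow> \<delta> (x + y) = \<delta> x + \<delta> y"
  by (simp add: derivation_def)

lemma derivation_mult: "derivation \<delta> \<Longrightarrow> \<delta> (x * y) = \<delta> x * y + x * \<delta> y"
  by (simp add: derivation_def)

lemma derivation_zero: "derivation \<delta> \<Longrightarrow> \<delta> 0 = 0"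
  using derivation_add[of \<delta> 0 0] by simp

lemma derivation_one: "derivation \<delta> \<Longrightarrow> \<delta> 1 = 0"
  using derivation_mult[of \<delta> 1 1] by simp

lemma derivation_minus: "derivation \<delta> \<Longrightarrow> \<delta> (- x) = - \<delta> x"
  using derivation_add[of \<delta> x "- x"] derivation_zero[of \<delta>] by (simp add: minus_unique)

lemma derivation_of_nat: "derivation \<delta> \<Longrightarrow> \<delta> (of_nat m) = 0"
  by (induction m) (simp_all add: derivation_zero derivation_add derivation_one)

lemma derivation_funpow_zero: "derivation \<delta> \<Longrightarrow> (\<delta> ^^ k) 0 = 0"
  by (induction k) (simp_all add: derivation_zero)

lemma derivation_funpow_minus: "derivation \<delta> \<Longrightarrow> (\<delta> ^^ k) (- x) = - (\<delta> ^^ k) x"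
  by (induction k) (simp_all add: derivation_minus)

lemma derivation_funpow_one: "derivation \<delta> \<Longrightarrow> (\<delta> ^^ k) 1 = (if k = 0 then 1 else 0)"
  by (induction k) (auto simp: derivation_one derivation_zero derivation_funpow_zero)

lemma derivation_inverse:
  assumes "derivation \<delta>" and "y \<noteq> 0"
  shows "\<delta> (inverse y) = - (inverse y * \<delta> y * inverse y)"
proof -
  have "\<delta> y * inverse y + y * \<delta> (inverse y) = 0"
    using assms derivation_mult[of \<delta> y "inverse y"] derivation_one[of \<delta>] by simp
  then have "y * \<delta> (inverse y) = - (\<delta> y * inverse y)"
    by (simp add: eq_neg_iff_add_eq_0 add.commute)
  then have "inverse y * (y * \<delta> (inverse y)) = inverse y * - (\<delta> y * inverse y)"
    by simp
  then show ?thesis using assms(2) by (simp add: mult.assoc[symmetric])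
qed

section \<open>Remainders of right division by a linear polynomial\<close>

(* Pairing of the coefficients of f with a weight sequence w.  With w the sequence of
   norms N_i(a) this is the Lam--Leroy formula for the value f(a). *)
definition poly_pairing :: "'a::ring_1 poly \<Rightarrow> (nat \<Rightarrow> 'a) \<Rightarrow> 'a" where
  "poly_pairing f w = (\<Sum>i\<le>degree f. coeff f i * w i)"

lemma poly_pairing_bound: "degree f \<le> N \<Longrightarrow> poly_pairing f w = (\<Sum>i\<le>N. coeff f i * w i)"
  unfolding poly_pairing_def by (rule sum.mono_neutral_left) (auto simp: coeff_eq_0)

lemma poly_pairing_diff: "poly_pairing (f - g) w = poly_pairing f w - poly_pairing g w"
proof -
  let ?N = "max (degree f) (degree g)"
  have "degree (f - g) \<le> ?N" by (rule degree_diff_le_max)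
  then show ?thesis
    by (simp add: poly_pairing_bound[of _ ?N] left_diff_distrib sum_subtractf)
qed

lemma poly_pairing_monom: "poly_pairing (monom c n) w = c * w n"
proof -
  have "poly_pairing (monom c n) w = (\<Sum>i\<le>n. if i = n then c * w n else 0)"
    by (rule trans[OF poly_pairing_bound[OF degree_monom_le]], rule sum.cong) auto
  then show ?thesis by simp
qed

lemma poly_pairing_const: "w 0 = 1 \<Longrightarrow> poly_pairing [:b:] w = b"
  using poly_pairing_monom[of b 0 w] by (simp add: monom_0)

(* Division with constant remainder for any additive operator M that, like right
   multiplication by t - a in an Ore extension, raises degrees by at most one and
   keeps the coefficient of a monomial as the top coefficient of its image. *)
lemma remainder_exists:
  fixes M :: "'a::ring_1 poly \<Rightarrow> 'a poly"
  assumes add: "\<And>p q. M (p + q) = M p + M q"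
    and deg: "\<And>c d. degree (M (monom c d)) \<le> Suc d"
    and lead: "\<And>c d. coeff (M (monom c d)) (Suc d) = c"
  shows "\<exists>q b. f = M q + [:b:]"
proof (induction "degree f" arbitrary: f rule: less_induct)
  case less
  have M0: "M 0 = 0" using add[of 0 0] by simp
  show ?case
  proof (cases "degree f")
    case 0
    then show ?thesis using M0 degree0_coeffs[of f] by (metis add.left_neutral)
  next
    case (Suc d)
    define g where "g = f - M (monom (lead_coeff f) d)"
    have "degree g \<le> d"
    proof (rule degree_le, intro allI impI)
      fix m assume "d < m"
      then consider "m = Suc d" | "Suc d < m" by linarith
      then show "coeff g m = 0"
        using deg[of "lead_coeff f" d] lead[of "lead_coeff f" d] Suc
        by cases (auto simp: g_def coeff_eq_0)
    qed
    then obtain q b where "g = M q + [:b:]" using less.hyps Suc by fastforce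
    then have "f = M (q + monom (lead_coeff f) d) + [:b:]" by (simp add: g_def add algebra_simps)
    then show ?thesis by blast
  qed
qed

(* A pairing that annihilates the image of M and is normalised by w 0 = 1 computes the
   unique remainder; this turns the THE-definitions of evaluation into explicit sums. *)
lemma remainder_eq_pairing:
  fixes M :: "'a::ring_1 poly \<Rightarrow> 'a poly"
  assumes "\<exists>q b. f = M q + [:b:]" and "w 0 = 1" and "\<And>q. poly_pairing (M q) w = 0"
  shows "(THE b. \<exists>q. f - [:b:] = M q) = poly_pairing f w"
proof (rule the_equality)
  obtain q b where qb: "f = M q + [:b:]" using assms(1) by blast
  have "poly_pairing f w = b"
    using poly_pairing_diff[of f "[:b:]" w] assms(2,3) qb by (simp add: poly_pairing_const)
  then show "\<exists>q. f - [:poly_pairing f w:] = M q" using qb by auto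
next
  fix b assume "\<exists>q. f - [:b:] = M q"
  then have "poly_pairing (f - [:b:]) w = 0" using assms(3) by auto
  then show "b = poly_pairing f w" using assms(2) by (simp add: poly_pairing_diff poly_pairing_const)
qed

section \<open>Evaluation in the skew polynomial ring K[t;sigma]\<close>

(* Coefficients of p (t - a) in K[t;sigma], using t^i (-a) = -sigma^i(a) t^i. *)
lemma skew_mult_linear_coeff:
  assumes "ring_automorphism \<sigma>"
  shows "coeff (skew_mult \<sigma> p [:-a, 1:]) m
       = (if m = 0 then 0 else coeff p (m - 1)) - coeff p m * (\<sigma> ^^ m) a"
proof -
  have aut: "ring_automorphism (\<sigma> ^^ i)" for i by (rule automorphism_funpow[OF assms])
  have expand: "skew_mult \<sigma> p [:-a, 1:]
      = (\<Sum>i\<le>degree p. monom (coeff p i * (\<sigma> ^^ i) (- a)) i + monom (coeff p i) (Suc i))"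
    unfolding skew_mult_def using automorphism_one[OF aut] by (simp add: numeral_2_eq_2)
  show ?thesis
    unfolding expand by (cases m) (auto simp: coeff_sum sum.distrib automorphism_minus[OF aut] coeff_eq_0)
qed

lemma skew_mult_linear_add:
  "ring_automorphism \<sigma> \<Longrightarrow>
   skew_mult \<sigma> (p + q) [:-a, 1:] = skew_mult \<sigma> p [:-a, 1:] + skew_mult \<sigma> q [:-a, 1:]"
  by (rule poly_eqI) (simp add: skew_mult_linear_coeff algebra_simps)

lemma skew_remainder_exists:
  assumes "ring_automorphism \<sigma>"
  shows "\<exists>q b. f = skew_mult \<sigma> q [:-a, 1:] + [:b:]"
proof (rule remainder_exists)
  show "degree (skew_mult \<sigma> (monom c d) [:-a, 1:]) \<le> Suc d" for c d
    by (rule degree_le) (auto simp: skew_mult_linear_coeff[OF assms])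
qed (simp_all add: skew_mult_linear_add[OF assms] skew_mult_linear_coeff[OF assms])

(* The sigma-norms N_0(a) = 1, N_(k+1)(a) = sigma^k(a) N_k(a), that is
   N_k(a) = sigma^(k-1)(a) ... sigma(a) a, the value of t^k at a. *)
fun skew_norm :: "('a::division_ring \<Rightarrow> 'a) \<Rightarrow> 'a \<Rightarrow> nat \<Rightarrow> 'a" where
  "skew_norm \<sigma> a 0 = 1"
| "skew_norm \<sigma> a (Suc k) = (\<sigma> ^^ k) a * skew_norm \<sigma> a k"

lemma skew_pairing_linear_multiple:
  assumes "ring_automorphism \<sigma>"
  shows "poly_pairing (skew_mult \<sigma> q [:-a, 1:]) (skew_norm \<sigma> a) = 0"
proof -
  let ?D = "Suc (degree q)" and ?N = "skew_norm \<sigma> a"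
  have "degree (skew_mult \<sigma> q [:-a, 1:]) \<le> ?D"
    by (rule degree_le) (auto simp: skew_mult_linear_coeff[OF assms] coeff_eq_0)
  then have "poly_pairing (skew_mult \<sigma> q [:-a, 1:]) ?N
      = (\<Sum>m\<le>?D. (if m = 0 then 0 else coeff q (m - 1)) * ?N m)
        - (\<Sum>m\<le>?D. coeff q m * (\<sigma> ^^ m) a * ?N m)"
    by (simp add: poly_pairing_bound skew_mult_linear_coeff[OF assms] left_diff_distrib sum_subtractf)
  also have "(\<Sum>m\<le>?D. (if m = 0 then 0 else coeff q (m - 1)) * ?N m)
      = (\<Sum>i\<le>degree q. coeff q i * ?N (Suc i))"
    by (simp only: sum.atMost_Suc_shift) simp
  also have "(\<Sum>m\<le>?D. coeff q m * (\<sigma> ^^ m) a * ?N m) = (\<Sum>i\<le>degree q. coeff q i * ?N (Suc i))"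
    by (simp add: coeff_eq_0 mult.assoc)
  finally show ?thesis by simp
qed

lemma skew_eval_eq_pairing:
  assumes "ring_automorphism \<sigma>"
  shows "skew_eval \<sigma> f a = poly_pairing f (skew_norm \<sigma> a)"
  unfolding skew_eval_def
  by (rule remainder_eq_pairing)
     (simp_all add: skew_remainder_exists[OF assms] skew_pairing_linear_multiple[OF assms])

lemma skew_norm_Suc':
  assumes "ring_automorphism \<sigma>"
  shows "skew_norm \<sigma> a (Suc k) = \<sigma> (skew_norm \<sigma> a k) * a"
proof (induction k)
  case 0
  then show ?case by (simp add: automorphism_one[OF assms])
next
  case (Suc k)
  have "\<sigma> (skew_norm \<sigma> a (Suc k)) * a = (\<sigma> ^^ Suc k) a * (\<sigma> (skew_norm \<sigma> a k) * a)"
    by (simp add: automorphism_mult[OF assms] mult.assoc funpow_swap1)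
  then show ?case using Suc by simp
qed

lemma skew_norm_conjugate:
  assumes "ring_automorphism \<sigma>" and "x \<noteq> 0"
  shows "skew_norm \<sigma> (\<sigma> x * inverse x) k = (\<sigma> ^^ k) x * inverse x"
proof (induction k)
  case 0
  then show ?case using assms(2) by simp
next
  case (Suc k)
  have aut: "ring_automorphism (\<sigma> ^^ k)" by (rule automorphism_funpow[OF assms(1)])
  have nz: "(\<sigma> ^^ k) x \<noteq> 0" using automorphism_eq_0_iff[OF aut] assms(2) by simp
  have "skew_norm \<sigma> (\<sigma> x * inverse x) (Suc k)
      = (\<sigma> ^^ k) (\<sigma> x) * (inverse ((\<sigma> ^^ k) x) * (\<sigma> ^^ k) x) * inverse x"
    using Suc by (simp add: automorphism_mult[OF aut] automorphism_inverse[OF aut] mult.assoc)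
  also have "\<dots> = (\<sigma> ^^ Suc k) x * inverse x" using nz by (simp add: funpow_swap1)
  finally show ?case .
qed

section \<open>Independence of the powers of an outer automorphism\<close>

lemma funpow_mod_period:
  assumes "\<sigma> ^^ n = id"
  shows "\<sigma> ^^ k = \<sigma> ^^ (k mod n)"
proof -
  have "\<sigma> ^^ k = \<sigma> ^^ (k mod n + n * (k div n))" by simp
  also have "\<dots> = \<sigma> ^^ (k mod n) \<circ> (\<sigma> ^^ n) ^^ (k div n)"
    by (simp only: funpow_add funpow_mult)
  finally show ?thesis using assms by (simp add: id_funpow)
qed

lemma conjugate_powers_imp_inner:
  assumes period: "\<sigma> ^^ n = id" and "i < n" "j < n" "i \<noteq> j" and "e \<noteq> 0"
    and conj: "\<And>w. (\<sigma> ^^ i) w = e * (\<sigma> ^^ j) w * inverse e"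
  shows "\<exists>r. 1 \<le> r \<and> r < n \<and> inner_automorphism (\<sigma> ^^ r)"
proof (intro exI conjI)
  define r where "r = (i + (n - j)) mod n"
  show "1 \<le> r" "r < n"
    using assms(2-4) by (auto simp: r_def mod_if)
  show "inner_automorphism (\<sigma> ^^ r)"
    unfolding inner_automorphism_def
  proof (intro exI conjI allI)
    fix u
    have "(\<sigma> ^^ j) ((\<sigma> ^^ (n - j)) u) = (\<sigma> ^^ (j + (n - j))) u"
      by (simp add: funpow_add)
    then have "(\<sigma> ^^ j) ((\<sigma> ^^ (n - j)) u) = u"
      using assms(3) period by simp
    moreover have "(\<sigma> ^^ i) ((\<sigma> ^^ (n - j)) u) = (\<sigma> ^^ r) u"
      unfolding r_def funpow_mod_period[OF period, symmetric] by (simp add: funpow_add)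
    ultimately show "(\<sigma> ^^ r) u = e * u * inverse e" using conj by metis
  qed (fact assms(5))
qed

lemma support_shrinks:
  fixes n k :: nat
  assumes "\<And>j. c j = 0 \<Longrightarrow> d j = 0" and "d k = 0" "c k \<noteq> 0" "k < n"
  shows "card {j. j < n \<and> d j \<noteq> 0} < card {j. j < n \<and> c j \<noteq> 0}"
proof (rule psubset_card_mono)
  show "finite {j. j < n \<and> c j \<noteq> 0}" by simp
  show "{j. j < n \<and> d j \<noteq> 0} \<subset> {j. j < n \<and> c j \<noteq> 0}" using assms by blast
qed

(* Dedekind--Artin independence: if no sigma^i with 1 <= i < n is inner, then
   sum_(i<n) c_i sigma^i(z) = 0 for all z forces all c_i = 0.  Comparing a relation with
   its translate by w gives a relation with smaller support; its vanishing shows that two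
   distinct powers differ by an inner automorphism. *)
lemma automorphism_powers_left_independent:
  assumes aut: "ring_automorphism \<sigma>" and period: "\<sigma> ^^ n = id"
    and outer: "\<forall>i. 1 \<le> i \<and> i < n \<longrightarrow> \<not> inner_automorphism (\<sigma> ^^ i)"
  shows "(\<And>z. (\<Sum>i<n. c i * (\<sigma> ^^ i) z) = 0) \<Longrightarrow> k < n \<Longrightarrow> c k = 0"
proof (induction "card {i. i < n \<and> c i \<noteq> 0}" arbitrary: c k rule: less_induct)
  case less
  have mult: "(\<sigma> ^^ i) (x * y) = (\<sigma> ^^ i) x * (\<sigma> ^^ i) y" for i x y
    by (rule automorphism_mult[OF automorphism_funpow[OF aut]])
  show "c k = 0"
  proof (rule ccontr)
    assume ck: "c k \<noteq> 0"
    show False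
    proof (cases "\<exists>i<n. i \<noteq> k \<and> c i \<noteq> 0")
      case True
      then obtain i where i: "i < n" "i \<noteq> k" "c i \<noteq> 0" by blast
      define e where "e = inverse (c k) * c i"
      have "e * (\<sigma> ^^ i) w = (\<sigma> ^^ k) w * e" for w
      proof -
        define d where "d j = inverse (c k) * c j * (\<sigma> ^^ j) w - (\<sigma> ^^ k) w * inverse (c k) * c j" for j
        have "(\<Sum>j<n. d j * (\<sigma> ^^ j) z)
            = inverse (c k) * (\<Sum>j<n. c j * (\<sigma> ^^ j) (w * z))
              - (\<sigma> ^^ k) w * inverse (c k) * (\<Sum>j<n. c j * (\<sigma> ^^ j) z)" for z
          by (simp add: d_def mult left_diff_distrib sum_subtractf sum_distrib_left mult.assoc)
        then have "\<And>z. (\<Sum>j<n. d j * (\<sigma> ^^ j) z) = 0" using less.prems(1) by simp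
        moreover have "card {j. j < n \<and> d j \<noteq> 0} < card {j. j < n \<and> c j \<noteq> 0}"
          using ck less.prems(2) by (intro support_shrinks) (auto simp: d_def mult.assoc)
        ultimately have "d i = 0" using less.hyps i(1) by blast
        then show ?thesis by (simp add: d_def e_def mult.assoc)
      qed
      moreover have "e \<noteq> 0" using ck i(3) by (simp add: e_def)
      ultimately have "(\<sigma> ^^ i) w = inverse e * (\<sigma> ^^ k) w * inverse (inverse e)" for w
        by (metis left_inverse mult.assoc mult_1_left inverse_inverse_eq)
      then show False
        using conjugate_powers_imp_inner[OF period i(1) less.prems(2) i(2)] \<open>e \<noteq> 0\<close> outer
        by (meson inverse_nonzero_iff_nonzero)
    next
      case False
      then have "(\<Sum>i<n. c i * (\<sigma> ^^ i) 1) = (\<Sum>i<n. if i = k then c k else 0)"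
        by (intro sum.cong) (auto simp: automorphism_one[OF automorphism_funpow[OF aut]])
      then show False using less.prems ck by simp
    qed
  qed
qed

lemma automorphism_powers_right_independent:
  assumes aut: "ring_automorphism \<sigma>" and period: "\<sigma> ^^ n = id"
    and outer: "\<forall>i. 1 \<le> i \<and> i < n \<longrightarrow> \<not> inner_automorphism (\<sigma> ^^ i)"
  shows "(\<And>z. (\<Sum>i<n. (\<sigma> ^^ i) z * c i) = 0) \<Longrightarrow> k < n \<Longrightarrow> c k = 0"
proof (induction "card {i. i < n \<and> c i \<noteq> 0}" arbitrary: c k rule: less_induct)
  case less
  have mult: "(\<sigma> ^^ i) (x * y) = (\<sigma> ^^ i) x * (\<sigma> ^^ i) y" for i x y
    by (rule automorphism_mult[OF automorphism_funpow[OF aut]])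
  show "c k = 0"
  proof (rule ccontr)
    assume ck: "c k \<noteq> 0"
    show False
    proof (cases "\<exists>i<n. i \<noteq> k \<and> c i \<noteq> 0")
      case True
      then obtain i where i: "i < n" "i \<noteq> k" "c i \<noteq> 0" by blast
      define e where "e = c i * inverse (c k)"
      have "(\<sigma> ^^ i) w * e = e * (\<sigma> ^^ k) w" for w
      proof -
        define d where "d j = (\<sigma> ^^ j) w * c j * inverse (c k) - c j * inverse (c k) * (\<sigma> ^^ k) w" for j
        have "(\<Sum>j<n. (\<sigma> ^^ j) z * d j)
            = (\<Sum>j<n. (\<sigma> ^^ j) (z * w) * c j) * inverse (c k)
              - (\<Sum>j<n. (\<sigma> ^^ j) z * c j) * inverse (c k) * (\<sigma> ^^ k) w" for z
          by (simp add: d_def mult right_diff_distrib sum_subtractf sum_distrib_right mult.assoc)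
        then have "\<And>z. (\<Sum>j<n. (\<sigma> ^^ j) z * d j) = 0" using less.prems(1) by simp
        moreover have "card {j. j < n \<and> d j \<noteq> 0} < card {j. j < n \<and> c j \<noteq> 0}"
          using ck less.prems(2) by (intro support_shrinks) (auto simp: d_def mult.assoc)
        ultimately have "d i = 0" using less.hyps i(1) by blast
        then show ?thesis by (simp add: d_def e_def mult.assoc)
      qed
      moreover have "e \<noteq> 0" using ck i(3) by (simp add: e_def)
      ultimately have "(\<sigma> ^^ i) w = e * (\<sigma> ^^ k) w * inverse e" for w
        by (metis mult.assoc mult.right_neutral right_inverse)
      then show False
        using conjugate_powers_imp_inner[OF period i(1) less.prems(2) i(2)] \<open>e \<noteq> 0\<close> outer
        by blast
    next
      case False
      then have "(\<Sum>i<n. (\<sigma> ^^ i) 1 * c i) = (\<Sum>i<n. if i = k then c k else 0)"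
        by (intro sum.cong) (auto simp: automorphism_one[OF automorphism_funpow[OF aut]])
      then show False using less.prems ck by simp
    qed
  qed
qed

section \<open>Part (a): the polynomial t^n - 1 in K[t;sigma]\<close>

(* Hilbert 90 for division rings: N_n(a) = 1 implies that a is a sigma-conjugate of 1.
   Right independence gives z with y = sum_(k<n) sigma^k(z) N_k(a) nonzero, and the sum
   telescopes to sigma(y) a = y, so a = sigma(y^-1) (y^-1)^-1. *)
lemma skew_norm_one_imp_Delta_sigma_1:
  assumes aut: "ring_automorphism \<sigma>" and "n \<ge> 1" and period: "\<sigma> ^^ n = id"
    and outer: "\<forall>i. 1 \<le> i \<and> i < n \<longrightarrow> \<not> inner_automorphism (\<sigma> ^^ i)"
    and norm: "skew_norm \<sigma> a n = 1"
  shows "a \<in> Delta_sigma_1 \<sigma>"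
proof -
  define g where "g z k = (\<sigma> ^^ k) z * skew_norm \<sigma> a k" for z k
  have "\<not> (\<forall>z. (\<Sum>k<n. g z k) = 0)"
  proof
    assume "\<forall>z. (\<Sum>k<n. g z k) = 0"
    then have "skew_norm \<sigma> a 0 = 0"
      using \<open>n \<ge> 1\<close> unfolding g_def
      by (intro automorphism_powers_right_independent[OF aut period outer, of "skew_norm \<sigma> a" 0])
         auto
    then show False by simp
  qed
  then obtain z where y: "(\<Sum>k<n. g z k) \<noteq> 0" by blast
  define y where "y = (\<Sum>k<n. g z k)"
  have "\<sigma> (g z k) * a = g z (Suc k)" for k
  proof -
    have "\<sigma> (g z k) * a = \<sigma> ((\<sigma> ^^ k) z) * (\<sigma> (skew_norm \<sigma> a k) * a)"
      by (simp only: g_def automorphism_mult[OF aut] mult.assoc)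
    also have "\<dots> = g z (Suc k)"
      by (simp only: g_def skew_norm_Suc'[OF aut] funpow.simps(2) o_apply)
    finally show ?thesis .
  qed
  then have "\<sigma> y * a = (\<Sum>k<n. g z (Suc k))"
    by (simp add: y_def automorphism_sum[OF aut] sum_distrib_right)
  also have "\<dots> = y"
    using sum.lessThan_Suc_shift[of "g z" n] sum.lessThan_Suc[of "g z" n] period norm
    by (simp add: y_def g_def add.commute)
  finally have fixed: "\<sigma> y * a = y" .
  have "\<sigma> y \<noteq> 0" using automorphism_eq_0_iff[OF aut] y by (simp add: y_def)
  then have "a = inverse (\<sigma> y) * (\<sigma> y * a)" by (simp add: mult.assoc[symmetric])
  also have "\<dots> = \<sigma> (inverse y) * inverse (inverse y)"
    by (simp add: fixed automorphism_inverse[OF aut])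
  finally have "a = \<sigma> (inverse y) * inverse (inverse y)" .
  moreover have "inverse y \<noteq> 0" using y by (simp add: y_def)
  ultimately show ?thesis unfolding Delta_sigma_1_def by blast
qed

lemma skew_norm_Delta_sigma_1:
  assumes "ring_automorphism \<sigma>" and "\<sigma> ^^ n = id" and "a \<in> Delta_sigma_1 \<sigma>"
  shows "skew_norm \<sigma> a n = 1"
  using assms skew_norm_conjugate[OF assms(1)] by (auto simp: Delta_sigma_1_def)

lemma skew_roots_of_t_n_minus_1:
  assumes aut: "ring_automorphism \<sigma>" and "n \<ge> 1" and period: "\<sigma> ^^ n = id"
    and outer: "\<forall>i. 1 \<le> i \<and> i < n \<longrightarrow> \<not> inner_automorphism (\<sigma> ^^ i)"
  shows "{a. skew_eval \<sigma> (monom 1 n - [:1:]) a = 0} = Delta_sigma_1 \<sigma>"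
proof -
  have "skew_eval \<sigma> (monom 1 n - [:1:]) a = skew_norm \<sigma> a n - 1" for a
    by (simp add: skew_eval_eq_pairing[OF aut] poly_pairing_diff poly_pairing_monom
        poly_pairing_const[of "skew_norm \<sigma> a"] del: skew_norm.simps(2))
  then show ?thesis
    using skew_norm_one_imp_Delta_sigma_1[OF assms] skew_norm_Delta_sigma_1[OF aut period] by auto
qed

lemma skew_eval_conjugate:
  assumes "ring_automorphism \<sigma>" and "z \<noteq> 0"
  shows "skew_eval \<sigma> f (\<sigma> z * inverse z) * z = (\<Sum>i\<le>degree f. coeff f i * (\<sigma> ^^ i) z)"
  using assms by (simp add: skew_eval_eq_pairing poly_pairing_def skew_norm_conjugate
      sum_distrib_right mult.assoc del: skew_norm.simps)

lemma Delta_sigma_1_not_annihilated: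
  assumes aut: "ring_automorphism \<sigma>" and period: "\<sigma> ^^ n = id"
    and outer: "\<forall>i. 1 \<le> i \<and> i < n \<longrightarrow> \<not> inner_automorphism (\<sigma> ^^ i)"
    and "f \<noteq> 0" and "degree f < n"
  shows "\<exists>a\<in>Delta_sigma_1 \<sigma>. skew_eval \<sigma> f a \<noteq> 0"
proof (rule ccontr)
  assume "\<not> ?thesis"
  then have vanish: "skew_eval \<sigma> f (\<sigma> z * inverse z) = 0" if "z \<noteq> 0" for z
    using that by (auto simp: Delta_sigma_1_def)
  have "(\<Sum>i<n. coeff f i * (\<sigma> ^^ i) z) = 0" for z
  proof (cases "z = 0")
    case True
    then show ?thesis by (simp add: automorphism_zero[OF automorphism_funpow[OF aut]])
  next
    case False
    have "(\<Sum>i<n. coeff f i * (\<sigma> ^^ i) z) = (\<Sum>i\<le>degree f. coeff f i * (\<sigma> ^^ i) z)"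
      using \<open>degree f < n\<close> by (intro sum.mono_neutral_right) (auto simp: coeff_eq_0)
    then show ?thesis using skew_eval_conjugate[OF aut False, of f] vanish[OF False] by simp
  qed
  then have "coeff f (degree f) = 0"
    using automorphism_powers_left_independent[OF aut period outer] \<open>degree f < n\<close> by blast
  then show False using \<open>f \<noteq> 0\<close> by simp
qed

section \<open>Evaluation in the differential polynomial ring K[t;delta]\<close>

lemma diff_mult_linear_coeff:
  assumes der: "derivation \<delta>" and "degree p \<le> N"
  shows "coeff (diff_mult \<delta> p [:-a, 1:]) m = (if m = 0 then 0 else coeff p (m - 1))
      - (\<Sum>i\<le>N. coeff p i * of_nat (i choose m) * (\<delta> ^^ (i - m)) a)"
proof -
  have top: "(\<Sum>k\<le>i. monom (coeff p i * of_nat (i choose k) * (\<delta> ^^ (i - k)) 1) (Suc k))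
      = monom (coeff p i) (Suc i)" for i
  proof -
    have "(\<Sum>k\<le>i. monom (coeff p i * of_nat (i choose k) * (\<delta> ^^ (i - k)) 1) (Suc k))
        = (\<Sum>k\<le>i. if k = i then monom (coeff p i) (Suc i) else 0)"
      by (rule sum.cong) (auto simp: derivation_funpow_one[OF der])
    then show ?thesis by simp
  qed
  have expand: "diff_mult \<delta> p [:-a, 1:] = (\<Sum>i\<le>degree p.
      (\<Sum>k\<le>i. monom (coeff p i * of_nat (i choose k) * (\<delta> ^^ (i - k)) (- a)) k)
      + monom (coeff p i) (Suc i))"
    unfolding diff_mult_def by (simp add: numeral_2_eq_2 top sum.distrib)
  have shift: "(\<Sum>i\<le>degree p. coeff (monom (coeff p i) (Suc i)) m)
      = (if m = 0 then 0 else coeff p (m - 1))"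
    by (cases m) (auto simp: coeff_eq_0)
  have lower: "coeff (\<Sum>k\<le>i. monom (coeff p i * of_nat (i choose k) * (\<delta> ^^ (i - k)) (- a)) k) m
      = - (coeff p i * of_nat (i choose m) * (\<delta> ^^ (i - m)) a)" for i
    by (auto simp: coeff_sum derivation_funpow_minus[OF der] binomial_eq_0)
  have "coeff (diff_mult \<delta> p [:-a, 1:]) m = (if m = 0 then 0 else coeff p (m - 1))
      - (\<Sum>i\<le>degree p. coeff p i * of_nat (i choose m) * (\<delta> ^^ (i - m)) a)"
    unfolding expand coeff_sum[of _ "{..degree p}"] coeff_add sum.distrib shift lower
    by (simp add: sum_negf)
  also have "(\<Sum>i\<le>degree p. coeff p i * of_nat (i choose m) * (\<delta> ^^ (i - m)) a)
      = (\<Sum>i\<le>N. coeff p i * of_nat (i choose m) * (\<delta> ^^ (i - m)) a)"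
    using assms(2) by (intro sum.mono_neutral_left) (auto simp: coeff_eq_0)
  finally show ?thesis .
qed

lemma diff_mult_linear_add:
  assumes "derivation \<delta>"
  shows "diff_mult \<delta> (p + q) [:-a, 1:] = diff_mult \<delta> p [:-a, 1:] + diff_mult \<delta> q [:-a, 1:]"
proof (rule poly_eqI)
  fix m
  let ?N = "max (degree p) (degree q)"
  have "degree (p + q) \<le> ?N" by (rule degree_add_le_max)
  then show "coeff (diff_mult \<delta> (p + q) [:-a, 1:]) m
      = coeff (diff_mult \<delta> p [:-a, 1:] + diff_mult \<delta> q [:-a, 1:]) m"
    by (simp add: diff_mult_linear_coeff[OF assms, of _ ?N] distrib_right sum.distrib algebra_simps)
qed

lemma diff_remainder_exists:
  assumes "derivation \<delta>"
  shows "\<exists>q b. f = diff_mult \<delta> q [:-a, 1:] + [:b:]"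
proof (rule remainder_exists)
  have coeff_monom_mult: "coeff (diff_mult \<delta> (monom c d) [:-a, 1:]) m = coeff (monom c d) (m - 1)"
    if "d < m" for c d m
  proof -
    have "(\<Sum>i\<le>d. coeff (monom c d) i * of_nat (i choose m) * (\<delta> ^^ (i - m)) a) = 0"
      using that by (intro sum.neutral) (auto simp: binomial_eq_0)
    then show ?thesis
      using that diff_mult_linear_coeff[OF assms degree_monom_le, of c d a m] by simp
  qed
  show "degree (diff_mult \<delta> (monom c d) [:-a, 1:]) \<le> Suc d" for c d
    by (rule degree_le) (auto simp: coeff_monom_mult)
  show "coeff (diff_mult \<delta> (monom c d) [:-a, 1:]) (Suc d) = c" for c d
    by (simp add: coeff_monom_mult)
qed (simp add: diff_mult_linear_add[OF assms])

(* The delta-norms N_0(a) = 1, N_(k+1)(a) = delta(N_k(a)) + N_k(a) a, the value of t^k at a. *)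
fun diff_norm :: "('a::division_ring \<Rightarrow> 'a) \<Rightarrow> 'a \<Rightarrow> nat \<Rightarrow> 'a" where
  "diff_norm \<delta> a 0 = 1"
| "diff_norm \<delta> a (Suc k) = \<delta> (diff_norm \<delta> a k) + diff_norm \<delta> a k * a"

definition diff_norm_step :: "('a::division_ring \<Rightarrow> 'a) \<Rightarrow> 'a \<Rightarrow> 'a \<Rightarrow> 'a" where
  "diff_norm_step \<delta> a y = \<delta> y + y * a"

lemma diff_norm_iterate: "diff_norm \<delta> a k = (diff_norm_step \<delta> a ^^ k) 1"
  by (induction k) (simp_all add: diff_norm_step_def)

lemma diff_norm_step_leibniz:
  assumes der: "derivation \<delta>"
  shows "(diff_norm_step \<delta> a ^^ r) (c * y)
       = (\<Sum>k\<le>r. of_nat (r choose k) * (\<delta> ^^ (r - k)) c * (diff_norm_step \<delta> a ^^ k) y)"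
proof (induction r)
  case 0
  then show ?case by simp
next
  case (Suc r)
  let ?L = "diff_norm_step \<delta> a"
  define F where "F k = of_nat (r choose k) * (\<delta> ^^ (Suc r - k)) c * (?L ^^ k) y" for k
  define G where "G k = of_nat (r choose k) * (\<delta> ^^ (r - k)) c * (?L ^^ Suc k) y" for k
  have L_add: "?L (u + v) = ?L u + ?L v" for u v
    by (simp add: diff_norm_step_def derivation_add[OF der] algebra_simps)
  have L_zero: "?L 0 = 0"
    by (simp add: diff_norm_step_def derivation_zero[OF der])
  have L_sum: "?L (\<Sum>k\<in>A. h k) = (\<Sum>k\<in>A. ?L (h k))" for A h
    by (induction A rule: infinite_finite_induct) (simp_all add: L_add L_zero)
  have L_term: "?L (of_nat (r choose k) * (\<delta> ^^ (r - k)) c * (?L ^^ k) y) = F k + G k"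
    if "k \<le> r" for k
    using that by (simp add: diff_norm_step_def derivation_mult[OF der] derivation_of_nat[OF der]
        F_def G_def Suc_diff_le algebra_simps)
  have "(?L ^^ Suc r) (c * y) = (\<Sum>k\<le>r. F k + G k)"
    using Suc L_term by (simp add: L_sum)
  also have "\<dots> = F 0 + (\<Sum>k\<le>r. F (Suc k) + G k)"
  proof -
    have "(\<Sum>k\<le>r. F k) = F 0 + (\<Sum>k\<le>r. F (Suc k))"
      using sum.atMost_Suc_shift[of F r] by (simp add: F_def binomial_eq_0)
    then show ?thesis by (simp add: sum.distrib)
  qed
  also have "\<dots> = (\<Sum>k\<le>Suc r. of_nat (Suc r choose k) * (\<delta> ^^ (Suc r - k)) c * (?L ^^ k) y)"
    by (simp only: sum.atMost_Suc_shift) (simp add: F_def G_def distrib_right add.commute)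
  finally show ?case .
qed

(* Hence N_(i+1)(a) = sum_m (i choose m) delta^(i-m)(a) N_m(a), mirroring the product t^i a. *)
lemma diff_norm_recurrence:
  assumes "derivation \<delta>"
  shows "diff_norm \<delta> a (Suc i) = (\<Sum>m\<le>i. of_nat (i choose m) * (\<delta> ^^ (i - m)) a * diff_norm \<delta> a m)"
proof -
  have "diff_norm \<delta> a (Suc i) = (diff_norm_step \<delta> a ^^ i) (a * 1)"
    using derivation_one[OF assms] by (simp add: diff_norm_iterate funpow_swap1 diff_norm_step_def)
  then show ?thesis by (simp only: diff_norm_step_leibniz[OF assms] diff_norm_iterate)
qed

lemma diff_pairing_linear_multiple:
  assumes der: "derivation \<delta>"
  shows "poly_pairing (diff_mult \<delta> q [:-a, 1:]) (diff_norm \<delta> a) = 0"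
proof -
  let ?D = "Suc (degree q)"
  define T where "T i m = of_nat (i choose m) * (\<delta> ^^ (i - m)) a * diff_norm \<delta> a m" for i m
  have T_vanish: "(\<Sum>m\<le>?D. T i m) = (\<Sum>m\<le>i. T i m)" if "i \<le> degree q" for i
    using that by (intro sum.mono_neutral_right) (auto simp: T_def binomial_eq_0)
  have "degree (diff_mult \<delta> q [:-a, 1:]) \<le> ?D"
    by (rule degree_le) (auto simp: diff_mult_linear_coeff[OF der order.refl] coeff_eq_0
        binomial_eq_0 intro!: sum.neutral)
  then have "poly_pairing (diff_mult \<delta> q [:-a, 1:]) (diff_norm \<delta> a)
      = (\<Sum>m\<le>?D. (if m = 0 then 0 else coeff q (m - 1)) * diff_norm \<delta> a m)
        - (\<Sum>m\<le>?D. \<Sum>i\<le>degree q. coeff q i * T i m)"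
    by (simp add: poly_pairing_bound diff_mult_linear_coeff[OF der order.refl] left_diff_distrib
        sum_subtractf sum_distrib_right T_def mult.assoc)
  also have "(\<Sum>m\<le>?D. (if m = 0 then 0 else coeff q (m - 1)) * diff_norm \<delta> a m)
      = (\<Sum>i\<le>degree q. coeff q i * (\<Sum>m\<le>i. T i m))"
    by (simp only: sum.atMost_Suc_shift) (simp add: diff_norm_recurrence[OF der] T_def del: diff_norm.simps(2))
  also have "(\<Sum>m\<le>?D. \<Sum>i\<le>degree q. coeff q i * T i m)
      = (\<Sum>i\<le>degree q. coeff q i * (\<Sum>m\<le>i. T i m))"
  proof -
    have "(\<Sum>m\<le>?D. \<Sum>i\<le>degree q. coeff q i * T i m)
        = (\<Sum>i\<le>degree q. coeff q i * (\<Sum>m\<le>?D. T i m))"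
      by (rule trans[OF sum.swap]) (simp only: sum_distrib_left)
    then show ?thesis by (simp add: T_vanish del: sum.atMost_Suc)
  qed
  finally show ?thesis by simp
qed

lemma diff_eval_eq_pairing:
  assumes "derivation \<delta>"
  shows "diff_eval \<delta> f a = poly_pairing f (diff_norm \<delta> a)"
  unfolding diff_eval_def
  by (rule remainder_eq_pairing)
     (simp_all add: diff_remainder_exists[OF assms] diff_pairing_linear_multiple[OF assms])

section \<open>Part (b): the polynomial t^N in K[t;delta]\<close>

lemma diff_norm_conjugate:
  assumes der: "derivation \<delta>" and "x \<noteq> 0"
  shows "diff_norm \<delta> (\<delta> x * inverse x) k * x = (\<delta> ^^ k) x"
proof (induction k)
  case 0
  then show ?case by simp
next
  case (Suc k)
  let ?a = "\<delta> x * inverse x" and ?N = "diff_norm \<delta> (\<delta> x * inverse x) k"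
  have "?a * x = \<delta> x" using assms(2) by (simp add: mult.assoc)
  then have "diff_norm \<delta> ?a (Suc k) * x = \<delta> ?N * x + ?N * \<delta> x"
    by (simp add: distrib_right mult.assoc)
  also have "\<dots> = \<delta> (?N * x)" by (simp add: derivation_mult[OF der])
  finally show ?case using Suc by simp
qed

(* If some norm of a vanishes, take the last nonzero one y = N_k(a); then
   delta(y) = - y a, so a = delta(y^-1) (y^-1)^-1 is a delta-conjugate of 0. *)
lemma diff_norm_zero_imp_Delta_delta_0:
  assumes der: "derivation \<delta>" and norm: "diff_norm \<delta> a N = 0"
  shows "a \<in> Delta_delta_0 \<delta>"
proof -
  obtain k where k: "diff_norm \<delta> a k \<noteq> 0" "diff_norm \<delta> a (Suc k) = 0"
  proof (rule ccontr)
    assume "\<not> thesis"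
    with that have "diff_norm \<delta> a k \<noteq> 0" for k by (induction k) auto
    with norm show False by blast
  qed
  define y where "y = diff_norm \<delta> a k"
  have "y \<noteq> 0" using k(1) by (simp add: y_def)
  have "\<delta> y = - (y * a)" using k(2) by (simp add: y_def eq_neg_iff_add_eq_0)
  then have "\<delta> (inverse y) * inverse (inverse y) = inverse y * (y * a)"
    using \<open>y \<noteq> 0\<close> by (simp add: derivation_inverse[OF der] mult.assoc)
  also have "\<dots> = a" using \<open>y \<noteq> 0\<close> by (simp add: mult.assoc[symmetric])
  finally have "a = \<delta> (inverse y) * inverse (inverse y)" by simp
  moreover have "inverse y \<noteq> 0" using \<open>y \<noteq> 0\<close> by simp
  ultimately show ?thesis unfolding Delta_delta_0_def by blast
qed

lemma diff_roots_of_t_N: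
  assumes der: "derivation \<delta>" and nilpotent: "\<delta> ^^ N = (\<lambda>_. 0)"
  shows "{a. diff_eval \<delta> (monom 1 N) a = 0} = Delta_delta_0 \<delta>"
proof -
  have eval: "diff_eval \<delta> (monom 1 N) a = diff_norm \<delta> a N" for a
    unfolding diff_eval_eq_pairing[OF der] poly_pairing_monom by simp
  have "diff_norm \<delta> a N = 0" if conj: "a \<in> Delta_delta_0 \<delta>" for a
  proof -
    obtain x where x: "x \<noteq> 0" "a = \<delta> x * inverse x"
      using conj unfolding Delta_delta_0_def by blast
    have "diff_norm \<delta> a N * x = (\<delta> ^^ N) x"
      unfolding x(2) by (rule diff_norm_conjugate[OF der x(1)])
    also have "\<dots> = 0" by (simp add: nilpotent)
    finally have "diff_norm \<delta> a N * x = 0" .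
    then show ?thesis using x(1) by simp
  qed
  then show ?thesis using diff_norm_zero_imp_Delta_delta_0[OF der] unfolding eval by blast
qed

lemma diff_eval_conjugate:
  assumes "derivation \<delta>" and "x \<noteq> 0"
  shows "diff_eval \<delta> f (\<delta> x * inverse x) * x = (\<Sum>i\<le>degree f. coeff f i * (\<delta> ^^ i) x)"
  using assms by (simp add: diff_eval_eq_pairing poly_pairing_def diff_norm_conjugate
      sum_distrib_right mult.assoc del: diff_norm.simps)

lemma Delta_delta_0_not_annihilated:
  assumes der: "derivation \<delta>"
    and independent: "\<forall>m c. m < N \<and> (\<forall>x. (\<Sum>i\<le>m. c i * (\<delta> ^^ i) x) = 0) \<longrightarrow> (\<forall>i\<le>m. c i = 0)"
    and "f \<noteq> 0" and "degree f < N"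
  shows "\<exists>a\<in>Delta_delta_0 \<delta>. diff_eval \<delta> f a \<noteq> 0"
proof (rule ccontr)
  assume "\<not> ?thesis"
  then have vanish: "diff_eval \<delta> f (\<delta> x * inverse x) = 0" if "x \<noteq> 0" for x
    using that by (auto simp: Delta_delta_0_def)
  have "(\<Sum>i\<le>degree f. coeff f i * (\<delta> ^^ i) x) = 0" for x
  proof (cases "x = 0")
    case True
    then show ?thesis by (simp add: derivation_funpow_zero[OF der])
  next
    case False
    then show ?thesis using diff_eval_conjugate[OF der False, of f] vanish[OF False] by simp
  qed
  then have "coeff f (degree f) = 0"
    using independent \<open>degree f < N\<close> by blast
  then show False using \<open>f \<noteq> 0\<close> by simp
qed

lemma t_n_minus_1_minimal_polynomial:
  assumes aut: "ring_automorphism \<sigma>" and "n \<ge> 1" and period: "\<sigma> ^^ n = id"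
    and outer: "\<forall>i. 1 \<le> i \<and> i < n \<longrightarrow> \<not> inner_automorphism (\<sigma> ^^ i)"
  shows "{a. skew_eval \<sigma> (monom 1 n - [:1:]) a = 0} = Delta_sigma_1 \<sigma>
      \<and> (\<forall>f. f \<noteq> 0 \<and> degree f < n \<longrightarrow> (\<exists>a\<in>Delta_sigma_1 \<sigma>. skew_eval \<sigma> f a \<noteq> 0))"
  using skew_roots_of_t_n_minus_1[OF assms] Delta_sigma_1_not_annihilated[OF aut period outer] by blast

lemma t_N_minimal_polynomial:
  assumes der: "derivation \<delta>" and nilpotent: "\<delta> ^^ N = (\<lambda>_. 0)"
    and independent: "\<forall>m c. m < N \<and> (\<forall>x. (\<Sum>i\<le>m. c i * (\<delta> ^^ i) x) = 0) \<longrightarrow> (\<forall>i\<le>m. c i = 0)"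
  shows "{a. diff_eval \<delta> (monom 1 N) a = 0} = Delta_delta_0 \<delta>
      \<and> (\<forall>f. f \<noteq> 0 \<and> degree f < N \<longrightarrow> (\<exists>a\<in>Delta_delta_0 \<delta>. diff_eval \<delta> f a \<noteq> 0))"
  using diff_roots_of_t_N[OF der nilpotent] Delta_delta_0_not_annihilated[OF der independent] by blast

(* The characteristic enters only through N = p^n, and sigma^i ~= id already follows
   from sigma^i not being inner. *)
theorem proposition2p9:
  shows "(\<forall>(\<sigma> :: 'a::division_ring \<Rightarrow> 'a) (n::nat).
            ring_automorphism \<sigma> \<and> n \<ge> 1 \<and> \<sigma> ^^ n = id
            \<and> (\<forall>i. 1 \<le> i \<and> i < n \<longrightarrow> \<sigma> ^^ i \<noteq> id)
            \<and> (\<forall>i. 1 \<le> i \<and> i < n \<longrightarrow> \<not> inner_automorphism (\<sigma> ^^ i))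
          \<longrightarrow> {a. skew_eval \<sigma> (monom 1 n - [:1:]) a = 0} = Delta_sigma_1 \<sigma>
            \<and> (\<forall>f. f \<noteq> 0 \<and> degree f < n \<longrightarrow>
                   (\<exists>a\<in>Delta_sigma_1 \<sigma>. skew_eval \<sigma> f a \<noteq> 0)))
       \<and> (\<forall>(\<delta> :: 'b::division_ring \<Rightarrow> 'b) (p::nat) (n::nat).
            CHAR('b) = p \<and> p > 0 \<and> derivation \<delta> \<and> \<delta> ^^ (p ^ n) = (\<lambda>_. 0)
            \<and> (\<forall>m c. m < p ^ n \<and> (\<forall>x. (\<Sum>i\<le>m. c i * (\<delta> ^^ i) x) = 0)
                      \<longrightarrow> (\<forall>i\<le>m. c i = 0))
          \<longrightarrow> {a. diff_eval \<delta> (monom 1 (p ^ n)) a = 0} = Delta_delta_0 \<delta>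
            \<and> (\<forall>f. f \<noteq> 0 \<and> degree f < p ^ n \<longrightarrow>
                   (\<exists>a\<in>Delta_delta_0 \<delta>. diff_eval \<delta> f a \<noteq> 0)))"
  apply (intro conjI; intro allI impI; elim conjE)
  subgoal by (rule t_n_minus_1_minimal_polynomial; assumption)
  subgoal by (rule t_N_minimal_polynomial; assumption)
  done

end
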